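(* Let $n\ge3$, $q\in\{1,\dots,n-1\}$ and $k=\gcd(n,q)$. For $r\in\{1,\dots,n-1\}$ and $x,y\in\mathbb R^n$ define the biquadratic form $$B_{\Phi^{(n,r)}}(x;y)=(n-2)\sum_{i=1}^n x_i^2y_i^2+\sum_{i=1}^n x_{\sigma_r(i)}^2y_i^2-2\sum_{1\le i<j\le n}x_iy_ix_jy_j,$$ regarded as an element of $\mathcal P_{2n,4}$. Then $B_{\Phi^{(n,q)}}$ is extremal in $\mathcal P_{2n,4}$ if and only if $B_{\Phi^{(n,k)}}$ is extremal in $\mathcal P_{2n,4}$.
   Context: $\sigma_r(i)\equiv i+r\pmod n$ with values in $\{1,\dots,n\}$. $\mathcal P_{m,d}$ is the convex cone of positive semidefinite real forms in $m$ variables of degree $d$; these forms $B_{\Phi^{(n,r)}}$ are positive semidefinite. A form $F\in\mathcal P_{m,d}$ is extremal if $F=F_1+F_2$ with $F_i\in\mathcal P_{m,d}$ implies $F_i=\lambda_iF$ with $\lambda_i\ge0$. *)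

theory Defs
  imports Complex_Main
begin

text \<open>Real forms (homogeneous polynomials) of degree d in m variables, represented
as polynomial functions of z :: nat \<Rightarrow> real that use only the variables z 0, ..., z (m-1).
Over the reals a polynomial function determines its coefficients, so this is faithful.\<close>

definition exps :: "nat \<Rightarrow> nat \<Rightarrow> (nat \<Rightarrow> nat) set" where
  "exps m d = {\<alpha>. (\<forall>i\<ge>m. \<alpha> i = 0) \<and> (\<Sum>i<m. \<alpha> i) = d}"

definition is_form :: "nat \<Rightarrow> nat \<Rightarrow> ((nat \<Rightarrow> real) \<Rightarrow> real) \<Rightarrow> bool" where
  "is_form m d F \<longleftrightarrow> (\<exists>c :: (nat \<Rightarrow> nat) \<Rightarrow> real.
      \<forall>z. F z = (\<Sum>\<alpha>\<in>exps m d. c \<alpha> * (\<Prod>i<m. z i ^ \<alpha> i)))"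

definition psd_forms :: "nat \<Rightarrow> nat \<Rightarrow> ((nat \<Rightarrow> real) \<Rightarrow> real) set" where
  "psd_forms m d = {F. is_form m d F \<and> (\<forall>z. 0 \<le> F z)}"

definition extremal :: "nat \<Rightarrow> nat \<Rightarrow> ((nat \<Rightarrow> real) \<Rightarrow> real) \<Rightarrow> bool" where
  "extremal m d F \<longleftrightarrow> F \<in> psd_forms m d \<and>
     (\<forall>F1 \<in> psd_forms m d. \<forall>F2 \<in> psd_forms m d.
        (\<forall>z. F z = F1 z + F2 z) \<longrightarrow>
        (\<exists>l1\<ge>0. \<forall>z. F1 z = l1 * F z) \<and> (\<exists>l2\<ge>0. \<forall>z. F2 z = l2 * F z))"

text \<open>The biquadratic form B_{Phi^(n,r)}; 0-indexed: x_i = z i, y_i = z (n+i) for i < n,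
and sigma_r(i) = (i + r) mod n.\<close>
definition B_Phi :: "nat \<Rightarrow> nat \<Rightarrow> (nat \<Rightarrow> real) \<Rightarrow> real" where
  "B_Phi n r z =
     (real n - 2) * (\<Sum>i<n. (z i)^2 * (z (n+i))^2)
     + (\<Sum>i<n. (z ((i + r) mod n))^2 * (z (n+i))^2)
     - 2 * (\<Sum>j<n. \<Sum>i<j. z i * z (n+i) * z j * z (n+j))"

end

theory Submission
  imports Defs "HOL-Combinatorics.Permutations" "HOL-Number_Theory.Cong"
begin

text \<open>As permutations of Z/n, the rotations \<sigma>_k and \<sigma>_q both consist
  of k cycles of length n/k, so some permutation \<pi> satisfies \<pi> \<circ> \<sigma>_k = \<sigma>_q \<circ> \<pi>.
  Relabelling the x- and the y-variables simultaneously by \<pi> carries B_Phi n k to B_Phi n q,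
  and extremality in P_{m,d} is invariant under permutations of the variables.\<close>

lemma exps_permute:
  assumes p: "p permutes {..<m}" and \<alpha>: "\<alpha> \<in> exps m d"
  shows "\<alpha> \<circ> p \<in> exps m d"
proof -
  have "\<forall>i\<ge>m. (\<alpha> \<circ> p) i = 0"
    using \<alpha> permutes_not_in[OF p] by (auto simp: exps_def)
  moreover have "(\<Sum>i<m. (\<alpha> \<circ> p) i) = d"
    using \<alpha> sum.permute[OF p, of \<alpha>] by (simp add: exps_def)
  ultimately show ?thesis by (simp add: exps_def)
qed

lemma is_form_permute:
  assumes p: "p permutes {..<m}" and F: "is_form m d F"
  shows "is_form m d (\<lambda>z. F (z \<circ> p))"
proof -
  obtain c where c: "\<And>z. F z = (\<Sum>\<alpha>\<in>exps m d. c \<alpha> * (\<Prod>i<m. z i ^ \<alpha> i))"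
    using F unfolding is_form_def by blast
  have "bij_betw (\<lambda>\<alpha>. \<alpha> \<circ> p) (exps m d) (exps m d)"
    by (rule bij_betw_byWitness[where f' = "\<lambda>\<alpha>. \<alpha> \<circ> inv p"])
      (use exps_permute[OF p] exps_permute[OF permutes_inv[OF p]] in
        \<open>auto simp: comp_assoc permutes_inv_o[OF p]\<close>)
  then have reindex: "(\<Sum>\<alpha>\<in>exps m d. g \<alpha>) = (\<Sum>\<beta>\<in>exps m d. g (\<beta> \<circ> p))" for g :: "_ \<Rightarrow> real"
    by (rule sum.reindex_bij_betw[symmetric])
  have "F (z \<circ> p) = (\<Sum>\<beta>\<in>exps m d. c (\<beta> \<circ> p) * (\<Prod>i<m. z i ^ \<beta> i))" for z
  proof -
    have "(\<Prod>i<m. z (p i) ^ \<beta> (p i)) = (\<Prod>i<m. z i ^ \<beta> i)" for \<beta>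
      using prod.permute[OF p, of "\<lambda>i. z i ^ \<beta> i"] by simp
    then show ?thesis
      by (simp add: c reindex[of "\<lambda>\<alpha>. c \<alpha> * (\<Prod>i<m. z (p i) ^ \<alpha> i)"])
  qed
  then show ?thesis
    unfolding is_form_def by (intro exI[of _ "\<lambda>\<beta>. c (\<beta> \<circ> p)"]) blast
qed

lemma psd_forms_permute:
  assumes "p permutes {..<m}" and "F \<in> psd_forms m d"
  shows "(\<lambda>z. F (z \<circ> p)) \<in> psd_forms m d"
  using assms is_form_permute by (auto simp: psd_forms_def)

lemma extremal_permute:
  assumes p: "p permutes {..<m}" and F: "extremal m d F"
  shows "extremal m d (\<lambda>z. F (z \<circ> p))"
  unfolding extremal_def
proof (intro conjI ballI impI)
  have undo: "z \<circ> inv p \<circ> p = z" "z \<circ> p \<circ> inv p = z" for z :: "nat \<Rightarrow> real"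
    by (simp_all add: comp_assoc permutes_inv_o[OF p])
  have pull_back: "\<forall>z. G z = l * F (z \<circ> p)" if "\<forall>z. G (z \<circ> inv p) = l * F z" for G l
  proof
    fix z
    show "G z = l * F (z \<circ> p)"
      using that[rule_format, of "z \<circ> p"] by (simp only: undo)
  qed
  show "(\<lambda>z. F (z \<circ> p)) \<in> psd_forms m d"
    using psd_forms_permute[OF p, of F] F unfolding extremal_def by blast
  fix F1 F2 assume F1: "F1 \<in> psd_forms m d" and F2: "F2 \<in> psd_forms m d"
    and sum: "\<forall>z. F (z \<circ> p) = F1 z + F2 z"
  have "\<forall>z. F z = F1 (z \<circ> inv p) + F2 (z \<circ> inv p)"
  proof
    fix z
    show "F z = F1 (z \<circ> inv p) + F2 (z \<circ> inv p)"
      using sum[rule_format, of "z \<circ> inv p"] by (simp only: undo)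
  qed
  then have "(\<exists>l1\<ge>0. \<forall>z. F1 (z \<circ> inv p) = l1 * F z) \<and> (\<exists>l2\<ge>0. \<forall>z. F2 (z \<circ> inv p) = l2 * F z)"
    by (rule F[unfolded extremal_def, THEN conjunct2, rule_format (no_asm),
          OF psd_forms_permute[OF permutes_inv[OF p] F1] psd_forms_permute[OF permutes_inv[OF p] F2]])
  then obtain l1 l2 where "l1 \<ge> 0" "\<forall>z. F1 (z \<circ> inv p) = l1 * F z"
    and "l2 \<ge> 0" "\<forall>z. F2 (z \<circ> inv p) = l2 * F z"
    by blast
  then show "\<exists>l1\<ge>0. \<forall>z. F1 z = l1 * F (z \<circ> p)" and "\<exists>l2\<ge>0. \<forall>z. F2 z = l2 * F (z \<circ> p)"
    using pull_back by blast+
qed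

lemma extremal_permute_iff:
  assumes p: "p permutes {..<m}"
  shows "extremal m d (\<lambda>z. F (z \<circ> p)) \<longleftrightarrow> extremal m d F"
proof
  assume "extremal m d (\<lambda>z. F (z \<circ> p))"
  from extremal_permute[OF permutes_inv[OF p] this] show "extremal m d F"
    by (simp add: comp_assoc permutes_inv_o[OF p])
qed (rule extremal_permute[OF p])

lemma sum_lower_pairs:
  fixes f :: "nat \<Rightarrow> 'a :: comm_ring_1"
  shows "2 * (\<Sum>j<n. \<Sum>i<j. f i * f j) = (\<Sum>i<n. f i)\<^sup>2 - (\<Sum>i<n. (f i)\<^sup>2)"
proof (induction n)
  case (Suc n)
  have "2 * (\<Sum>j<Suc n. \<Sum>i<j. f i * f j)
      = 2 * (\<Sum>j<n. \<Sum>i<j. f i * f j) + 2 * (\<Sum>i<n. f i) * f n"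
    by (simp add: sum_distrib_right mult.assoc)
  with Suc show ?case
    by (simp add: power2_eq_square algebra_simps)
qed simp

text \<open>Unlike the sum over i < j in the definition, this form is visibly invariant under
  relabelling the indices.\<close>

lemma B_Phi_altdef:
  "B_Phi n r z = (real n - 2) * (\<Sum>i<n. (z i)\<^sup>2 * (z (n+i))\<^sup>2)
     + (\<Sum>i<n. (z ((i + r) mod n))\<^sup>2 * (z (n+i))\<^sup>2)
     - ((\<Sum>i<n. z i * z (n+i))\<^sup>2 - (\<Sum>i<n. (z i * z (n+i))\<^sup>2))"
proof -
  have "2 * (\<Sum>j<n. \<Sum>i<j. z i * z (n+i) * z j * z (n+j))
      = (\<Sum>i<n. z i * z (n+i))\<^sup>2 - (\<Sum>i<n. (z i * z (n+i))\<^sup>2)"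
    using sum_lower_pairs[of "\<lambda>i. z i * z (n+i)" n] by (simp add: mult.assoc)
  then show ?thesis
    unfolding B_Phi_def by linarith
qed

definition double_perm :: "nat \<Rightarrow> (nat \<Rightarrow> nat) \<Rightarrow> nat \<Rightarrow> nat" where
  "double_perm n \<pi> i = (if i < n then \<pi> i else n + \<pi> (i - n))"

lemma double_perm_permutes:
  assumes \<pi>: "\<pi> permutes {..<n}"
  shows "double_perm n \<pi> permutes {..<2*n}"
proof (rule bij_imp_permutes)
  have below: "i < n \<Longrightarrow> \<pi> i < n" "i < n \<Longrightarrow> inv \<pi> i < n" for i
    using permutes_in_image[OF \<pi>] permutes_in_image[OF permutes_inv[OF \<pi>]] by simp_all
  show "bij_betw (double_perm n \<pi>) {..<2*n} {..<2*n}"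
    by (rule bij_betw_byWitness[where f' = "double_perm n (inv \<pi>)"])
      (auto simp: double_perm_def below permutes_inverses[OF \<pi>]
        intro: order.strict_trans2[OF below(1)] order.strict_trans2[OF below(2)])
  show "double_perm n \<pi> i = i" if "i \<notin> {..<2*n}" for i
    using that permutes_not_in[OF \<pi>, of "i - n"] by (simp add: double_perm_def)
qed

lemma B_Phi_double_perm:
  assumes \<pi>: "\<pi> permutes {..<n}"
    and intertwines: "\<And>i. i < n \<Longrightarrow> \<pi> ((i + k) mod n) = (\<pi> i + q) mod n"
  shows "B_Phi n q = (\<lambda>z. B_Phi n k (z \<circ> double_perm n \<pi>))"
proof
  fix z :: "nat \<Rightarrow> real"
  let ?w = "z \<circ> double_perm n \<pi>"
  have transport: "(\<Sum>i<n. g (?w i) (?w (n+i)) (?w ((i + k) mod n)))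
      = (\<Sum>i<n. g (z i) (z (n+i)) (z ((i + q) mod n)))" for g :: "real \<Rightarrow> real \<Rightarrow> real \<Rightarrow> real"
  proof -
    have "?w ((i + k) mod n) = z ((\<pi> i + q) mod n)" if "i < n" for i
      using that intertwines[OF that] by (simp add: double_perm_def)
    then have "(\<Sum>i<n. g (?w i) (?w (n+i)) (?w ((i + k) mod n)))
        = (\<Sum>i<n. g (z (\<pi> i)) (z (n + \<pi> i)) (z ((\<pi> i + q) mod n)))"
      by (intro sum.cong) (simp_all add: double_perm_def)
    also have "\<dots> = (\<Sum>i<n. g (z i) (z (n+i)) (z ((i + q) mod n)))"
      using sum.permute[OF \<pi>, of "\<lambda>i. g (z i) (z (n+i)) (z ((i + q) mod n))"] by simp
    finally show ?thesis .
  qed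
  show "B_Phi n q z = B_Phi n k (z \<circ> double_perm n \<pi>)"
    unfolding B_Phi_altdef
      transport[of "\<lambda>a b c. a\<^sup>2 * b\<^sup>2"] transport[of "\<lambda>a b c. c\<^sup>2 * b\<^sup>2"]
      transport[of "\<lambda>a b c. a * b"] transport[of "\<lambda>a b c. (a * b)\<^sup>2"] ..
qed

text \<open>Writing i = a + k b with a < k, the map sends the b-th point a + k b of the
  \<sigma>_k-orbit of a to the b-th point a + q b of its \<sigma>_q-orbit.\<close>

definition rotation_intertwiner :: "nat \<Rightarrow> nat \<Rightarrow> nat \<Rightarrow> nat \<Rightarrow> nat" where
  "rotation_intertwiner n k q i = (if i < n then (i mod k + q * (i div k)) mod n else i)"

lemma rotation_intertwiner_intertwines:
  fixes n k q n' q' :: nat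
  assumes k: "0 < k" and n: "n = k * n'" and q: "q = k * q'" and i: "i < n"
  shows "rotation_intertwiner n k q ((i + k) mod n) = (rotation_intertwiner n k q i + q) mod n"
proof -
  have decomp: "(i + k) mod n = k * ((i div k + 1) mod n') + i mod k"
    using mod_mult2_eq[of "i + k" k n'] n k by simp
  have wrap: "q * (x mod n') mod n = q * x mod n" for x
  proof -
    have "q * (x mod n') mod n = k * (q' * (x mod n') mod n')"
      by (simp only: n q mult.assoc mod_mult_mult1)
    also have "\<dots> = q * x mod n"
      by (simp only: n q mult.assoc mod_mult_mult1 mod_mult_right_eq)
    finally show ?thesis .
  qed
  have "(i + k) mod n < n"
    using i by simp
  then have "rotation_intertwiner n k q ((i + k) mod n) = (i mod k + q * ((i div k + 1) mod n')) mod n"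
    using k by (simp add: rotation_intertwiner_def decomp)
  also have "\<dots> = (i mod k + q * (i div k + 1)) mod n"
    by (metis mod_add_right_eq wrap)
  also have "\<dots> = (i mod k + q * (i div k) + q) mod n"
    by (simp add: algebra_simps)
  also have "\<dots> = (rotation_intertwiner n k q i + q) mod n"
    using i by (simp add: rotation_intertwiner_def mod_add_left_eq)
  finally show ?thesis .
qed

lemma rotation_intertwiner_permutes:
  fixes n k q n' q' :: nat
  assumes k: "0 < k" and n: "n = k * n'" and q: "q = k * q'" and coprime: "coprime q' n'"
  shows "rotation_intertwiner n k q permutes {..<n}"
proof (rule inj_imp_permutes)
  let ?\<pi> = "rotation_intertwiner n k q"
  show "inj_on ?\<pi> {..<n}"
  proof (rule inj_onI)
    fix i j assume i: "i \<in> {..<n}" and j: "j \<in> {..<n}" and eq: "?\<pi> i = ?\<pi> j"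
    have residue: "(x mod k + q * y) mod n mod k = x mod k" for x y
      using n q mod_mod_cancel[of k n] by (simp add: mult.assoc)
    from eq i j have eq': "(i mod k + q * (i div k)) mod n = (j mod k + q * (j div k)) mod n"
      by (simp add: rotation_intertwiner_def)
    then have same_mod: "i mod k = j mod k"
      using residue[of i "i div k"] residue[of j "j div k"] by simp
    with eq' have "[q * (i div k) = q * (j div k)] (mod n)"
      by (simp add: cong_def[symmetric] cong_add_lcancel_nat)
    then have "[q' * (i div k) = q' * (j div k)] (mod n')"
      using n q k by (simp add: cong_def mult.assoc mod_mult_mult1)
    then have "[i div k = j div k] (mod n')"
      using cong_mult_lcancel_nat[OF coprime] by simp
    moreover have "i div k < n'" "j div k < n'"
      using i j n k by (auto simp: less_mult_imp_div_less mult.commute)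
    ultimately have "i div k = j div k"
      by (rule cong_less_modulus_unique_nat)
    with same_mod show "i = j"
      by (metis div_mult_mod_eq)
  qed
qed (auto simp: rotation_intertwiner_def)

lemma rotation_conjugator:
  fixes n q :: nat
  assumes "0 < n"
  obtains \<pi> where "\<pi> permutes {..<n}"
    and "\<And>i. i < n \<Longrightarrow> \<pi> ((i + gcd n q) mod n) = (\<pi> i + q) mod n"
proof -
  let ?k = "gcd n q"
  have k: "0 < ?k" and n: "n = ?k * (n div ?k)" and q: "q = ?k * (q div ?k)"
    using assms by simp_all
  have "coprime (q div ?k) (n div ?k)"
    using div_gcd_coprime[of n q] assms by (simp add: coprime_commute)
  then show thesis
    by (rule that[of "rotation_intertwiner n ?k q",
          OF rotation_intertwiner_permutes[OF k n q] rotation_intertwiner_intertwines[OF k n q]])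
qed

theorem proposition4:
  fixes n q :: nat
  assumes "n \<ge> 3" and "1 \<le> q" and "q \<le> n - 1"
  shows "extremal (2*n) 4 (B_Phi n q) \<longleftrightarrow> extremal (2*n) 4 (B_Phi n (gcd n q))"
proof -
  have "0 < n"
    using assms by simp
  then obtain \<pi> where \<pi>: "\<pi> permutes {..<n}"
    and intertwines: "\<And>i. i < n \<Longrightarrow> \<pi> ((i + gcd n q) mod n) = (\<pi> i + q) mod n"
    using rotation_conjugator[of n q] by blast
  have "B_Phi n q = (\<lambda>z. B_Phi n (gcd n q) (z \<circ> double_perm n \<pi>))"
    using \<pi> intertwines by (rule B_Phi_double_perm)
  then show ?thesis
    using extremal_permute_iff[OF double_perm_permutes[OF \<pi>], of 4 "B_Phi n (gcd n q)"] by simp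
qed

end
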